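(* Let $(s,\pi)$ be a plane permutation on $[n]$ with $s=(s_0s_1\cdots s_{n-1})$, let $h=(i,j,j+1,l)$ with $i\le j<j+1\le l$ and $\{i,j,j+1,l\}\subset[n-1]$, and let $(s^h,\pi^h)=\chi_h\circ(s,\pi)$. Below, each $v^r_1,\ldots,v^r_{m_r}$ ($r\in\{i,j,l\}$, $m_r\ge 0$) denotes a (possibly empty) list of further elements. Then, according to how $s_{i-1},s_j,s_l$ lie in the cycles of $\pi$, the cycles of $\pi^h$ containing these elements are as follows: (1) if $\pi$ has cycles $(s_{i-1},v_1^i,\ldots,v_{m_i}^i)$, $(s_j,v_1^j,\ldots,v_{m_j}^j)$, $(s_l,v_1^l,\ldots,v_{m_l}^l)$, then $\pi^h$ has the cycle $(s_{i-1},v_1^j,\ldots,v_{m_j}^j,s_j,v_1^l,\ldots,v_{m_l}^l,s_l,v_1^i,\ldots,v_{m_i}^i)$; (2) if $\pi$ has the cycle $(s_{i-1},v_1^i,\ldots,v_{m_i}^i,s_l,v_1^l,\ldots,v_{m_l}^l,s_j,v_1^j,\ldots,v_{m_j}^j)$, then $\pi^h$ has cycles $(s_{i-1},v_1^j,\ldots,v_{m_j}^j)$, $(s_j,v_1^l,\ldots,v_{m_l}^l)$, $(s_l,v_1^i,\ldots,v_{m_i}^i)$; (3) if $\pi$ has the cycle $(s_{i-1},v_1^i,\ldots,v_{m_i}^i,s_j,v_1^j,\ldots,v_{m_j}^j,s_l,v_1^l,\ldots,v_{m_l}^l)$, then $\pi^h$ has the cycle $(s_{i-1},v_1^j,\ldots,v_{m_j}^j,s_l,v_1^i,\ldots,v_{m_i}^i,s_j,v_1^l,\ldots,v_{m_l}^l)$;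 (4) if $\pi$ has cycles $(s_{i-1},v_1^i,\ldots,v_{m_i}^i,s_j,v_1^j,\ldots,v_{m_j}^j)$, $(s_l,v_1^l,\ldots,v_{m_l}^l)$, then $\pi^h$ has cycles $(s_{i-1},v_1^j,\ldots,v_{m_j}^j)$, $(s_j,v_1^l,\ldots,v_{m_l}^l,s_l,v_1^i,\ldots,v_{m_i}^i)$; (5) if $\pi$ has cycles $(s_{i-1},v_1^i,\ldots,v_{m_i}^i)$, $(s_j,v_1^j,\ldots,v_{m_j}^j,s_l,v_1^l,\ldots,v_{m_l}^l)$, then $\pi^h$ has cycles $(s_{i-1},v_1^j,\ldots,v_{m_j}^j,s_l,v_1^i,\ldots,v_{m_i}^i)$, $(s_j,v_1^l,\ldots,v_{m_l}^l)$; (6) if $\pi$ has cycles $(s_{i-1},v_1^i,\ldots,v_{m_i}^i,s_l,v_1^l,\ldots,v_{m_l}^l)$, $(s_j,v_1^j,\ldots,v_{m_j}^j)$, then $\pi^h$ has cycles $(s_{i-1},v_1^j,\ldots,v_{m_j}^j,s_j,v_1^l,\ldots,v_{m_l}^l)$, $(s_l,v_1^i,\ldots,v_{m_i}^i)$.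
   Context: Permutations of $[n]=\{1,\dots,n\}$ are multiplied as composition of maps, $(\sigma\tau)(x)=\sigma(\tau(x))$. A plane permutation on $[n]$ is a pair $(s,\pi)$ where $s=(s_0s_1\cdots s_{n-1})$ is an $n$-cycle on $[n]$, written with a fixed starting element $s_0$, and $\pi$ is an arbitrary permutation of $[n]$; its diagonal is $D=s\circ\pi^{-1}$. For $h=(i,j,k,l)$ with $i\le j<k\le l$ and $\{i,j,k,l\}\subset[n-1]$, let $s^h$ be the $n$-cycle $(s_0,\dots,s_{i-1},s_k,\dots,s_l,s_{j+1},\dots,s_{k-1},s_i,\dots,s_j,s_{l+1},\dots,s_{n-1})$ obtained by interchanging the blocks $s_i\cdots s_j$ and $s_k\cdots s_l$ (when $k=j+1$ the middle block is empty, and $s^h=(s_0,\dots,s_{i-1},s_k,\dots,s_l,s_i,\dots,s_j,s_{l+1},\dots)$), and let $\pi^h=D^{-1}\circ s^h$, so that $(s^h,\pi^h)$ is a plane permutation with the same diagonal $D$. Write $(s^h,\pi^h)=\chi_h\circ(s,\pi)$; when $k=j+1$, $\chi_h$ is called a transpose. *)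

theory Defs
  imports "HOL-Combinatorics.Combinatorics"
begin

(* The n-cycle s = (s_0 s_1 ... s_{n-1}) is given by the list ss = [s_0,...,s_{n-1}];
   as a map it is cycle_of_list ss (s_t \<mapsto> s_{t+1}, s_{n-1} \<mapsto> s_0). *)

definition blk :: "'a list \<Rightarrow> nat \<Rightarrow> nat \<Rightarrow> 'a list" where
  "blk ss a b = drop a (take (Suc b) ss)"

definition block_swap :: "'a list \<Rightarrow> nat \<Rightarrow> nat \<Rightarrow> nat \<Rightarrow> nat \<Rightarrow> 'a list" where
  "block_swap ss i j k l =
     take i ss @ blk ss k l @ drop (Suc j) (take k ss) @ blk ss i j @ drop (Suc l) ss"

definition diag :: "'a list \<Rightarrow> ('a \<Rightarrow> 'a) \<Rightarrow> 'a \<Rightarrow> 'a" where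
  "diag ss \<pi> = cycle_of_list ss \<circ> inv \<pi>"

definition pi_h :: "'a list \<Rightarrow> ('a \<Rightarrow> 'a) \<Rightarrow> nat \<Rightarrow> nat \<Rightarrow> nat \<Rightarrow> nat \<Rightarrow> 'a \<Rightarrow> 'a" where
  "pi_h ss \<pi> i j k l = inv (diag ss \<pi>) \<circ> cycle_of_list (block_swap ss i j k l)"

definition is_cycle_of :: "('a \<Rightarrow> 'a) \<Rightarrow> 'a list \<Rightarrow> bool" where
  "is_cycle_of p cs \<longleftrightarrow> cs \<noteq> [] \<and> distinct cs \<and>
     (\<forall>t < length cs. p (cs ! t) = cs ! (Suc t mod length cs))"

definition has_cycles :: "('a \<Rightarrow> 'a) \<Rightarrow> 'a list list \<Rightarrow> bool" where
  "has_cycles p Cs \<longleftrightarrow> (\<forall>C \<in> set Cs. is_cycle_of p C) \<and> distinct (concat Cs)"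

end

theory Submission imports Defs begin

text \<open>
  Swapping the adjacent blocks \<open>s\<^sub>i\<cdots>s\<^sub>j\<close> and \<open>s\<^sub>j\<^sub>+\<^sub>1\<cdots>s\<^sub>l\<close> changes the
  successor of exactly three elements of the cycle \<open>s\<close>: \<open>s\<^sub>i\<^sub>-\<^sub>1\<close>, \<open>s\<^sub>j\<close> and \<open>s\<^sub>l\<close> now
  precede \<open>s\<^sub>j\<^sub>+\<^sub>1\<close>, \<open>s\<^sub>l\<^sub>+\<^sub>1\<close> and \<open>s\<^sub>i\<close>. Hence \<open>s\<^sup>h = s \<circ> \<sigma>\<close> for the 3-cycle
  \<open>\<sigma> = (s\<^sub>i\<^sub>-\<^sub>1 s\<^sub>j s\<^sub>l)\<close>, and since the diagonal is unchanged,
  \<open>\<pi>\<^sup>h = D\<^sup>-\<^sup>1 \<circ> s \<circ> \<sigma> = \<pi> \<circ> \<sigma>\<close>. Composing \<open>\<pi>\<close> with \<open>\<sigma>\<close> only redirects the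
  arrows leaving these three elements, which cuts and reglues the cycles of \<open>\<pi>\<close>
  through them as listed in the six cases.
\<close>

fun path_to :: "('a \<Rightarrow> 'a) \<Rightarrow> 'a list \<Rightarrow> 'a \<Rightarrow> bool" where
  "path_to f [] y = True"
| "path_to f (x # xs) y \<longleftrightarrow> f x = hd (xs @ [y]) \<and> path_to f xs y"

lemma path_to_append:
  "path_to f (xs @ ys) y \<longleftrightarrow> path_to f xs (hd (ys @ [y])) \<and> path_to f ys y"
  by (induction xs) (auto simp: hd_append split: list.splits)

lemma path_to_iff_map: "path_to f xs y \<longleftrightarrow> map f xs = tl (xs @ [y])"
  by (induction xs) (auto simp: hd_append tl_append split: list.splits)

lemma path_to_cong: "(\<And>x. x \<in> set xs \<Longrightarrow> f x = g x) \<Longrightarrow> path_to f xs y = path_to g xs y"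
  by (induction xs) auto

lemma path_to_unique: "path_to f xs y \<Longrightarrow> path_to g xs y \<Longrightarrow> x \<in> set xs \<Longrightarrow> f x = g x"
  by (induction xs) auto

lemma path_to_iff_nth: "path_to f xs y \<longleftrightarrow> (\<forall>t<length xs. f (xs ! t) = (xs @ [y]) ! Suc t)"
proof -
  have "map f xs = tl (xs @ [y]) \<longleftrightarrow> (\<forall>t<length xs. map f xs ! t = tl (xs @ [y]) ! t)"
    by (subst list_eq_iff_nth_eq) simp
  also have "\<dots> \<longleftrightarrow> (\<forall>t<length xs. f (xs ! t) = (xs @ [y]) ! Suc t)"
    by (simp add: nth_tl)
  finally show ?thesis unfolding path_to_iff_map .
qed

lemma is_cycle_of_iff_path_to:
  "is_cycle_of p cs \<longleftrightarrow> cs \<noteq> [] \<and> distinct cs \<and> path_to p cs (hd cs)"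
proof -
  have "(cs @ [hd cs]) ! Suc t = cs ! (Suc t mod length cs)" if "cs \<noteq> []" "t < length cs" for t
    using that by (cases "Suc t = length cs") (auto simp: nth_append hd_conv_nth)
  then show ?thesis unfolding is_cycle_of_def path_to_iff_nth by auto
qed

lemma path_to_cycle_of_list:
  "distinct cs \<Longrightarrow> path_to (cycle_of_list cs) cs (hd cs)"
  using cyclic_rotation[of cs 1] by (cases cs) (simp_all add: path_to_iff_map rotate1_hd_tl)

lemma cycle_of_list_eqI:
  assumes "distinct cs" "path_to f cs (hd cs)" "\<And>x. x \<notin> set cs \<Longrightarrow> f x = x"
  shows "cycle_of_list cs = f"
proof
  fix x
  show "cycle_of_list cs x = f x"
  proof (cases "x \<in> set cs")
    case True
    with path_to_unique[OF path_to_cycle_of_list[OF assms(1)] assms(2)] show ?thesis .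
  next
    case False
    with assms(3) show ?thesis by (simp add: id_outside_supp)
  qed
qed

lemma path_to_swap_adjacent_blocks:
  assumes dist: "distinct (A @ a # C @ b # B @ c # D)"
    and path: "path_to s (A @ a # C @ b # B @ c # D) y"
  shows "path_to (s \<circ> cycle_of_list [a, b, c]) (A @ a # B @ c # C @ b # D) y"
proof -
  define \<sigma> where "\<sigma> = cycle_of_list [a, b, c]"
  have \<sigma>: "\<sigma> a = b" "\<sigma> b = c" "\<sigma> c = a" "x \<notin> {a, b, c} \<Longrightarrow> \<sigma> x = x" for x
    using dist by (auto simp: \<sigma>_def id_outside_supp)
  have avoid: "path_to (s \<circ> \<sigma>) X z = path_to s X z" if "set X \<inter> {a, b, c} = {}" for X z
    using that \<sigma>(4) by (intro path_to_cong) (metis comp_apply disjoint_iff)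
  from dist path show ?thesis
    unfolding \<sigma>_def[symmetric] by (simp add: path_to_append avoid \<sigma> hd_append)
qed

lemma cycle_of_list_swap_adjacent_blocks:
  assumes dist: "distinct (A @ a # C @ b # B @ c # D)"
  shows "cycle_of_list (A @ a # B @ c # C @ b # D)
           = cycle_of_list (A @ a # C @ b # B @ c # D) \<circ> cycle_of_list [a, b, c]"
proof (rule cycle_of_list_eqI)
  have "hd (A @ a # C @ b # B @ c # D) = hd (A @ a # B @ c # C @ b # D)"
    by (simp add: hd_append)
  with path_to_cycle_of_list[OF dist] show
    "path_to (cycle_of_list (A @ a # C @ b # B @ c # D) \<circ> cycle_of_list [a, b, c])
      (A @ a # B @ c # C @ b # D) (hd (A @ a # B @ c # C @ b # D))"
    using dist by (metis path_to_swap_adjacent_blocks)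
qed (use dist in \<open>auto simp: id_outside_supp\<close>)

lemma split_at_three_indices:
  assumes "p < q" "q < r" "r < length xs"
  obtains A C B D where "xs = A @ xs ! p # C @ xs ! q # B @ xs ! r # D"
    and "length A = p" "length C = q - p - 1" "length B = r - q - 1"
proof -
  have "xs = take r xs @ xs ! r # drop (Suc r) xs"
    using assms by (simp add: id_take_nth_drop)
  moreover have "take r xs = take q xs @ xs ! q # drop (Suc q) (take r xs)"
    using assms id_take_nth_drop[of q "take r xs"] by (simp add: min_def)
  moreover have "take q xs = take p xs @ xs ! p # drop (Suc p) (take q xs)"
    using assms id_take_nth_drop[of p "take q xs"] by (simp add: min_def)
  ultimately have "xs = take p xs @ xs ! p # drop (Suc p) (take q xs) @ xs ! q #
      drop (Suc q) (take r xs) @ xs ! r # drop (Suc r) xs"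
    by (metis append.assoc append_Cons)
  with assms show thesis by (intro that) auto
qed

lemma block_swap_adjacent:
  assumes "length A = i - 1" "length C = j - i" "length B = l - j - 1"
    and "1 \<le> i" "i \<le> j" "j < l"
  shows "block_swap (A @ a # C @ b # B @ c # D) i j (j + 1) l = A @ a # B @ c # C @ b # D"
  using assms by (simp add: block_swap_def blk_def take_append drop_append Suc_diff_le)

lemma pi_h_transpose:
  assumes "distinct ss" "bij \<pi>" "1 \<le> i" "i \<le> j" "j + 1 \<le> l" "l < length ss"
  shows "pi_h ss \<pi> i j (j + 1) l = \<pi> \<circ> cycle_of_list [ss ! (i - 1), ss ! j, ss ! l]"
proof -
  have "i - 1 < j" "j < l" using assms by auto
  then obtain A C B D where ss: "ss = A @ ss ! (i - 1) # C @ ss ! j # B @ ss ! l # D"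
    and len: "length A = i - 1" "length C = j - (i - 1) - 1" "length B = l - j - 1"
    using assms(6) by (rule split_at_three_indices)
  define s where "s = cycle_of_list ss"
  have "bij s" unfolding s_def by (simp add: permutation_bijective permutation_of_cycle)
  have dist: "distinct (A @ ss ! (i - 1) # C @ ss ! j # B @ ss ! l # D)"
    using assms(1) ss by metis
  have "block_swap ss i j (j + 1) l = A @ ss ! (i - 1) # B @ ss ! l # C @ ss ! j # D"
    by (subst ss, rule block_swap_adjacent) (use len assms in auto)
  then have "cycle_of_list (block_swap ss i j (j + 1) l)
               = s \<circ> cycle_of_list [ss ! (i - 1), ss ! j, ss ! l]"
    unfolding s_def using cycle_of_list_swap_adjacent_blocks[OF dist] ss by metis
  with \<open>bij s\<close> assms(2) show ?thesis
    unfolding pi_h_def diag_def s_def[symmetric]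
    by (simp add: o_inv_distrib bij_imp_bij_inv inv_inv_eq o_assoc bij_is_inj)
qed

lemma has_cycles_comp_cycle3:
  fixes p :: "'a \<Rightarrow> 'a"
  assumes "distinct [a, b, c]"
  defines "q \<equiv> p \<circ> cycle_of_list [a, b, c]"
  shows
   "(\<forall>vi vj vl. has_cycles p [a # vi, b # vj, c # vl] \<longrightarrow>
      has_cycles q [a # vj @ b # vl @ c # vi])
  \<and> (\<forall>vi vj vl. has_cycles p [a # vi @ c # vl @ b # vj] \<longrightarrow>
      has_cycles q [a # vj, b # vl, c # vi])
  \<and> (\<forall>vi vj vl. has_cycles p [a # vi @ b # vj @ c # vl] \<longrightarrow>
      has_cycles q [a # vj @ c # vi @ b # vl])
  \<and> (\<forall>vi vj vl. has_cycles p [a # vi @ b # vj, c # vl] \<longrightarrow>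
      has_cycles q [a # vj, b # vl @ c # vi])
  \<and> (\<forall>vi vj vl. has_cycles p [a # vi, b # vj @ c # vl] \<longrightarrow>
      has_cycles q [a # vj @ c # vi, b # vl])
  \<and> (\<forall>vi vj vl. has_cycles p [a # vi @ c # vl, b # vj] \<longrightarrow>
      has_cycles q [a # vj @ b # vl, c # vi])"
proof -
  have q: "q a = p b" "q b = p c" "q c = p a" "x \<notin> {a, b, c} \<Longrightarrow> q x = p x" for x
    using assms(1) by (auto simp: q_def id_outside_supp)
  have avoid: "path_to q X y = path_to p X y" if "a \<notin> set X" "b \<notin> set X" "c \<notin> set X" for X y
    using that by (intro path_to_cong q(4)) auto
  show ?thesis
    unfolding has_cycles_def is_cycle_of_iff_path_to
    by (intro conjI allI impI; clarsimp simp: path_to_append avoid q hd_append; blast)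
qed

theorem lemma2:
  fixes n i j l :: nat and ss :: "nat list" and \<pi> :: "nat \<Rightarrow> nat"
  assumes ss: "distinct ss" "set ss = {1..n}"
    and pi: "\<pi> permutes {1..n}"
    and h: "1 \<le> i" "i \<le> j" "j + 1 \<le> l" "l \<le> n - 1"
  defines "\<pi>h \<equiv> pi_h ss \<pi> i j (j + 1) l"
  shows
   "(\<forall>vi vj vl.
      has_cycles \<pi> [ss!(i-1) # vi, ss!j # vj, ss!l # vl] \<longrightarrow>
      has_cycles \<pi>h [ss!(i-1) # vj @ ss!j # vl @ ss!l # vi])
  \<and> (\<forall>vi vj vl.
      has_cycles \<pi> [ss!(i-1) # vi @ ss!l # vl @ ss!j # vj] \<longrightarrow>
      has_cycles \<pi>h [ss!(i-1) # vj, ss!j # vl, ss!l # vi])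
  \<and> (\<forall>vi vj vl.
      has_cycles \<pi> [ss!(i-1) # vi @ ss!j # vj @ ss!l # vl] \<longrightarrow>
      has_cycles \<pi>h [ss!(i-1) # vj @ ss!l # vi @ ss!j # vl])
  \<and> (\<forall>vi vj vl.
      has_cycles \<pi> [ss!(i-1) # vi @ ss!j # vj, ss!l # vl] \<longrightarrow>
      has_cycles \<pi>h [ss!(i-1) # vj, ss!j # vl @ ss!l # vi])
  \<and> (\<forall>vi vj vl.
      has_cycles \<pi> [ss!(i-1) # vi, ss!j # vj @ ss!l # vl] \<longrightarrow>
      has_cycles \<pi>h [ss!(i-1) # vj @ ss!l # vi, ss!j # vl])
  \<and> (\<forall>vi vj vl.
      has_cycles \<pi> [ss!(i-1) # vi @ ss!l # vl, ss!j # vj] \<longrightarrow>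
      has_cycles \<pi>h [ss!(i-1) # vj @ ss!j # vl, ss!l # vi])"
proof -
  have "length ss = n" using ss distinct_card[OF ss(1)] by simp
  with h have "l < length ss" by simp
  have \<pi>h: "\<pi>h = \<pi> \<circ> cycle_of_list [ss ! (i - 1), ss ! j, ss ! l]"
    unfolding \<pi>h_def using ss(1) permutes_bij[OF pi] h(1-3) \<open>l < length ss\<close>
    by (rule pi_h_transpose)
  have "distinct [ss ! (i - 1), ss ! j, ss ! l]"
    using ss(1) h \<open>l < length ss\<close> by (auto simp: nth_eq_iff_index_eq)
  then show ?thesis
    unfolding \<pi>h by (rule has_cycles_comp_cycle3)
qed

end
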